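(* Let $C\subset V(\tfrac12 H^{0}_{24})$ be a union of spheres such that $\chi_C$ is a perfect coloring of $\tfrac12 H^{0}_{24}$ with parameters $((20+c,\,256-c)(c,\,276-c))$. Then either $c$ is divisible by $3$ or $c\ge 25$.
   Context: $E^{24}$ is the set of binary words of length $24$ with Hamming distance. $\tfrac12 H^{0}_{24}$ is the graph on even-weight words of $E^{24}$, adjacent iff at Hamming distance exactly $2$ (degree $276$). A sphere is a set $S\subset V(\tfrac12 H^{0}_{24})$ consisting of all $24$ words at Hamming distance $1$ from some odd-weight word (its center). For a set $C$ with $\emptyset\ne C\subsetneq V$, $\chi_C$ is a perfect coloring with parameters $((a,b)(c,d))$ if every vertex of $C$ has exactly $a$ neighbours in $C$ and $b$ outside, and every vertex outside $C$ has exactly $c$ neighbours in $C$ and $d$ outside. *)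

theory Defs
  imports Main
begin

text \<open>Binary words of length 24 are represented by their supports: subsets of {..<24}.\<close>

definition word24 :: "nat set \<Rightarrow> bool" where
  "word24 x \<longleftrightarrow> x \<subseteq> {..<24}"

definition hdist :: "nat set \<Rightarrow> nat set \<Rightarrow> nat" where
  "hdist x y = card ((x - y) \<union> (y - x))"

text \<open>Vertex set of the halved 24-cube: even-weight words.\<close>
definition V24 :: "nat set set" where
  "V24 = {x. word24 x \<and> even (card x)}"

definition adj24 :: "nat set \<Rightarrow> nat set \<Rightarrow> bool" where
  "adj24 x y \<longleftrightarrow> hdist x y = 2"

definition nbrs24 :: "nat set \<Rightarrow> nat set set" where
  "nbrs24 x = {y \<in> V24. adj24 x y}"

definition sphere24 :: "nat set \<Rightarrow> nat set set" where
  "sphere24 z = {x. word24 x \<and> hdist x z = 1}"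

definition union_of_spheres :: "nat set set \<Rightarrow> bool" where
  "union_of_spheres C \<longleftrightarrow>
     (\<exists>Z. (\<forall>z\<in>Z. word24 z \<and> odd (card z)) \<and> C = \<Union> (sphere24 ` Z))"

definition perfect_coloring24 :: "nat set set \<Rightarrow> int \<Rightarrow> int \<Rightarrow> int \<Rightarrow> int \<Rightarrow> bool" where
  "perfect_coloring24 C a b c d \<longleftrightarrow>
     C \<noteq> {} \<and> C \<subset> V24 \<and>
     (\<forall>x\<in>C. int (card (nbrs24 x \<inter> C)) = a \<and> int (card (nbrs24 x - C)) = b) \<and>
     (\<forall>x\<in>V24 - C. int (card (nbrs24 x \<inter> C)) = c \<and> int (card (nbrs24 x - C)) = d)"

end

theory Submission
  imports Defs
begin

(* Write C as the union of the spheres with centers in a set Z of odd words.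
   A sphere is a 24-clique of the halved cube, and two distinct spheres share at most
   two words.  Hence, if two spheres of C overlap in a word x, then x has at least
   24 + 24 - 2 - 1 = 45 neighbours in C, i.e. 20 + c >= 45 and c >= 25.
   Otherwise the spheres are pairwise disjoint and |C| = 24 |Z|.  Counting the edges
   between C and its complement in two ways gives |C| (256 - c) = (|V| - |C|) c, and
   with |V| = 2^23 this becomes 2^8 * 24 |Z| = 2^23 c, so 3 divides c. *)

definition symdiff :: "'a set \<Rightarrow> 'a set \<Rightarrow> 'a set" where
  "symdiff x y = (x - y) \<union> (y - x)"

lemma hdist_symdiff: "hdist x y = card (symdiff x y)"
  by (simp add: hdist_def symdiff_def)

lemma symdiff_commute: "symdiff x y = symdiff y x"
  by (auto simp: symdiff_def)

lemma hdist_sym: "hdist x y = hdist y x"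
  by (simp add: hdist_symdiff symdiff_commute)

lemma symdiff_symdiff: "symdiff (symdiff x A) A = x"
  by (auto simp: symdiff_def)

lemma even_flip_iff:
  assumes "finite x"
  shows "even (card (symdiff x {i})) \<longleftrightarrow> odd (card x)"
proof (cases "i \<in> x")
  case True
  hence "symdiff x {i} = x - {i}" by (auto simp: symdiff_def)
  moreover have "card x \<ge> 1" using True assms by (metis One_nat_def Suc_leI card_gt_0_iff empty_iff)
  ultimately show ?thesis using True assms by auto
next
  case False
  hence "symdiff x {i} = insert i x" by (auto simp: symdiff_def)
  thus ?thesis using False assms by simp
qed

lemma inj_flip: "inj_on (\<lambda>i. symdiff z {i}) A"
proof (rule inj_onI)
  fix i j assume "symdiff z {i} = symdiff z {j}"
  hence "i \<in> symdiff z {j} \<longleftrightarrow> i \<in> symdiff z {i}" by simp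
  thus "i = j" by (auto simp: symdiff_def)
qed

lemma finite_word: "word24 z \<Longrightarrow> finite z"
  by (auto simp: word24_def intro: finite_subset)

lemma sphere_eq_flips:
  assumes "word24 z"
  shows "sphere24 z = (\<lambda>i. symdiff z {i}) ` {..<24}"
proof
  show "sphere24 z \<subseteq> (\<lambda>i. symdiff z {i}) ` {..<24}"
  proof
    fix x assume "x \<in> sphere24 z"
    hence w: "word24 x" and "card (symdiff x z) = 1"
      by (auto simp: sphere24_def hdist_symdiff)
    then obtain i where i: "symdiff x z = {i}" using card_1_singletonE by blast
    have "i \<in> x \<union> z" using i by (auto simp: symdiff_def)
    hence "i < 24" using w assms by (auto simp: word24_def)
    moreover have "x = symdiff z {i}" using i[symmetric] by (auto simp: symdiff_def)
    ultimately show "x \<in> (\<lambda>i. symdiff z {i}) ` {..<24}" by auto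
  qed
next
  show "(\<lambda>i. symdiff z {i}) ` {..<24} \<subseteq> sphere24 z"
  proof
    fix x assume "x \<in> (\<lambda>i. symdiff z {i}) ` {..<24}"
    then obtain i where i: "i < 24" "x = symdiff z {i}" by auto
    have "symdiff x z = {i}" using i by (auto simp: symdiff_def)
    moreover have "word24 x" using i assms by (auto simp: word24_def symdiff_def)
    ultimately show "x \<in> sphere24 z" by (simp add: sphere24_def hdist_symdiff)
  qed
qed

lemma card_sphere: "word24 z \<Longrightarrow> card (sphere24 z) = 24"
  by (simp add: sphere_eq_flips card_image inj_flip)

lemma finite_sphere: "word24 z \<Longrightarrow> finite (sphere24 z)"
  using card_sphere by (metis card.infinite zero_neq_numeral)

lemma sphere_subset_V24:
  assumes "word24 z" "odd (card z)"
  shows "sphere24 z \<subseteq> V24"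
  using assms even_flip_iff[OF finite_word[OF assms(1)]]
  by (auto simp: sphere_eq_flips V24_def word24_def symdiff_def)

lemma sphere_clique:
  assumes "word24 z" "odd (card z)" "x \<in> sphere24 z"
  shows "sphere24 z - {x} \<subseteq> nbrs24 x"
proof
  fix y assume y: "y \<in> sphere24 z - {x}"
  obtain i where i: "x = symdiff z {i}" using assms by (auto simp: sphere_eq_flips)
  obtain j where j: "y = symdiff z {j}" using y assms by (auto simp: sphere_eq_flips)
  have "i \<noteq> j" using i j y by auto
  hence "symdiff x y = {i, j}" using i j by (auto simp: symdiff_def)
  hence "adj24 x y" using \<open>i \<noteq> j\<close> by (simp add: adj24_def hdist_symdiff)
  moreover have "y \<in> V24" using y sphere_subset_V24[OF assms(1,2)] by auto
  ultimately show "y \<in> nbrs24 x" by (simp add: nbrs24_def)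
qed

(* Distinct spheres meet in at most two words: a common word determines which of the
   two coordinates in which the centers differ is flipped. *)
lemma card_sphere_Int_le:
  assumes "word24 z" "word24 z'" "z \<noteq> z'"
  shows "card (sphere24 z \<inter> sphere24 z') \<le> 2"
proof (cases "sphere24 z \<inter> sphere24 z' = {}")
  case True thus ?thesis by simp
next
  case False
  have common: "\<exists>i j. i \<noteq> j \<and> symdiff z z' = {i, j} \<and> y = symdiff z {i}"
    if y: "y \<in> sphere24 z \<inter> sphere24 z'" for y
  proof -
    obtain i j where i: "y = symdiff z {i}" and j: "y = symdiff z' {j}"
      using y assms(1,2) by (auto simp: sphere_eq_flips)
    have centers: "symdiff z z' = symdiff {i} {j}" using i j by (auto simp: symdiff_def)
    have "i \<noteq> j" using i j assms(3) by (auto simp: symdiff_def)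
    moreover have "symdiff z z' = {i, j}" using centers \<open>i \<noteq> j\<close> by (auto simp: symdiff_def)
    ultimately show ?thesis using i by blast
  qed
  have sub: "sphere24 z \<inter> sphere24 z' \<subseteq> (\<lambda>i. symdiff z {i}) ` symdiff z z'"
    using common by fastforce
  from False obtain y where "y \<in> sphere24 z \<inter> sphere24 z'" by auto
  then obtain i j where "i \<noteq> j" "symdiff z z' = {i, j}" using common by blast
  hence "card (symdiff z z') = 2" by simp
  hence "card ((\<lambda>i. symdiff z {i}) ` symdiff z z') = 2" by (simp add: card_image inj_flip)
  thus ?thesis using sub by (metis card_mono finite_imageI card.infinite zero_neq_numeral)
qed

(* Exactly half of the subsets of {..<n} have even size (for n > 0):
   flipping the element 0 swaps even and odd subsets. *)
lemma card_even_subsets: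
  assumes "0 < n"
  shows "2 * card {x \<in> Pow {..<n}. even (card x)} = 2 ^ n"
proof -
  define P where "P = Pow {..<n}"
  define Ev where "Ev = {x \<in> P. even (card x)}"
  define Od where "Od = {x \<in> P. odd (card x)}"
  have fin: "finite x" if "x \<in> P" for x using that by (auto simp: P_def intro: finite_subset)
  have flip_P: "symdiff x {0} \<in> P" if "x \<in> P" for x
    using that assms by (auto simp: P_def symdiff_def)
  have "bij_betw (\<lambda>x. symdiff x {0}) Ev Od"
  proof (rule bij_betw_byWitness[where f'="\<lambda>x. symdiff x {0}"])
    show "\<forall>a\<in>Ev. symdiff (symdiff a {0}) {0} = a" "\<forall>a\<in>Od. symdiff (symdiff a {0}) {0} = a"
      by (simp_all add: symdiff_symdiff)
    show "(\<lambda>x. symdiff x {0}) ` Ev \<subseteq> Od" "(\<lambda>x. symdiff x {0}) ` Od \<subseteq> Ev"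
      using flip_P even_flip_iff[OF fin] by (auto simp: Ev_def Od_def)
  qed
  hence "card Ev = card Od" by (rule bij_betw_same_card)
  moreover have "P = Ev \<union> Od" "Ev \<inter> Od = {}" "finite P" by (auto simp: Ev_def Od_def P_def)
  moreover have "card P = 2 ^ n" by (simp add: P_def card_Pow)
  ultimately show ?thesis unfolding Ev_def[symmetric] P_def[symmetric]
    by (metis card_Un_disjoint finite_Un mult_2)
qed

lemma V24_eq: "V24 = {x \<in> Pow {..<24}. even (card x)}"
  by (auto simp: V24_def word24_def)

lemma card_V24: "card V24 = 2 ^ 23"
  using card_even_subsets[of 24] by (simp add: V24_eq)

lemma finite_V24: "finite V24"
  by (simp add: V24_eq)

lemma card_cut_edges:
  assumes "finite V" "C \<subseteq> V" "\<And>x y. E x y \<longleftrightarrow> E y x"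
  shows "(\<Sum>x\<in>C. card ({y \<in> V. E x y} - C)) = (\<Sum>y\<in>V - C. card ({x \<in> V. E y x} \<inter> C))"
proof -
  have fC: "finite C" using assms(1,2) finite_subset by blast
  have "(\<Sum>x\<in>C. card ({y \<in> V. E x y} - C)) = card (SIGMA x:C. {y \<in> V. E x y} - C)"
    using fC assms(1) by (simp add: card_SigmaI)
  also have "(SIGMA x:C. {y \<in> V. E x y} - C) =
             (\<lambda>(y, x). (x, y)) ` (SIGMA y:V - C. {x \<in> V. E y x} \<inter> C)"
    using assms(2,3) by (auto simp: image_iff)
  also have "card \<dots> = card (SIGMA y:V - C. {x \<in> V. E y x} \<inter> C)"
    by (rule card_image) (auto simp: inj_on_def)
  also have "\<dots> = (\<Sum>y\<in>V - C. card ({x \<in> V. E y x} \<inter> C))"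
    using assms(1) by (simp add: card_SigmaI)
  finally show ?thesis .
qed

lemma perfect_coloring_balance:
  assumes "perfect_coloring24 C a b c d"
  shows "int (card C) * b = (2 ^ 23 - int (card C)) * c"
proof -
  have CV: "C \<subseteq> V24" using assms by (auto simp: perfect_coloring24_def)
  have fC: "finite C" using CV finite_V24 finite_subset by blast
  have "(\<Sum>x\<in>C. card (nbrs24 x - C)) = (\<Sum>y\<in>V24 - C. card (nbrs24 y \<inter> C))"
    using card_cut_edges[OF finite_V24 CV, of adj24]
    by (simp add: nbrs24_def adj24_def hdist_sym)
  hence "(\<Sum>x\<in>C. int (card (nbrs24 x - C))) = (\<Sum>y\<in>V24 - C. int (card (nbrs24 y \<inter> C)))"
    by (metis of_nat_sum)
  also have "(\<Sum>x\<in>C. int (card (nbrs24 x - C))) = (\<Sum>x\<in>C. b)"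
    using assms by (intro sum.cong) (auto simp: perfect_coloring24_def)
  also have "(\<Sum>y\<in>V24 - C. int (card (nbrs24 y \<inter> C))) = (\<Sum>y\<in>V24 - C. c)"
    using assms by (intro sum.cong) (auto simp: perfect_coloring24_def)
  finally have "int (card C) * b = int (card (V24 - C)) * c" by simp
  moreover have "card (V24 - C) = 2 ^ 23 - card C" "card C \<le> 2 ^ 23"
    using CV fC card_mono[OF finite_V24 CV] by (simp_all add: card_Diff_subset card_V24)
  ultimately show ?thesis by (simp add: of_nat_diff)
qed

lemma overlapping_spheres_neighbours:
  assumes Z: "\<And>z. z \<in> Z \<Longrightarrow> word24 z \<and> odd (card z)" and C: "C = \<Union> (sphere24 ` Z)"
    and z: "z \<in> Z" "z' \<in> Z" "z \<noteq> z'" and x: "x \<in> sphere24 z" "x \<in> sphere24 z'"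
  shows "45 \<le> card (nbrs24 x \<inter> C)"
proof -
  have wz: "word24 z" "odd (card z)" "word24 z'" "odd (card z')" using Z z by auto
  have fs: "finite (sphere24 z)" "finite (sphere24 z')" using finite_sphere wz by auto
  have "card (sphere24 z \<union> sphere24 z') + card (sphere24 z \<inter> sphere24 z') = 48"
    using card_Un_Int[OF fs] card_sphere wz by simp
  hence "46 \<le> card (sphere24 z \<union> sphere24 z')"
    using card_sphere_Int_le[OF wz(1,3) z(3)] by linarith
  hence "45 \<le> card ((sphere24 z \<union> sphere24 z') - {x})" using x fs by simp
  moreover have "(sphere24 z \<union> sphere24 z') - {x} \<subseteq> nbrs24 x \<inter> C"
    using sphere_clique[of z x] sphere_clique[of z' x] wz z x C by auto
  moreover have "finite (nbrs24 x \<inter> C)" using finite_V24 by (simp add: nbrs24_def)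
  ultimately show ?thesis by (meson card_mono le_trans)
qed

lemma card_disjoint_spheres:
  assumes Z: "\<And>z. z \<in> Z \<Longrightarrow> word24 z"
    and disj: "\<And>z z'. z \<in> Z \<Longrightarrow> z' \<in> Z \<Longrightarrow> z \<noteq> z' \<Longrightarrow> sphere24 z \<inter> sphere24 z' = {}"
  shows "card (\<Union> (sphere24 ` Z)) = 24 * card Z"
proof -
  have "Z \<subseteq> Pow {..<24}" using Z by (auto simp: word24_def)
  hence "finite Z" by (rule finite_subset) simp
  hence "card (\<Union> (sphere24 ` Z)) = (\<Sum>z\<in>Z. card (sphere24 z))"
    using finite_sphere Z disj by (intro card_UN_disjoint) auto
  also have "\<dots> = 24 * card Z" using card_sphere Z by simp
  finally show ?thesis .
qed

theorem lemma8:
  fixes C :: "nat set set" and c :: int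
  assumes "union_of_spheres C"
    and "perfect_coloring24 C (20 + c) (256 - c) c (276 - c)"
  shows "3 dvd c \<or> c \<ge> 25"
proof -
  obtain Z where Z: "\<And>z. z \<in> Z \<Longrightarrow> word24 z \<and> odd (card z)" and C: "C = \<Union> (sphere24 ` Z)"
    using assms(1) by (auto simp: union_of_spheres_def)
  show ?thesis
  proof (cases "\<exists>z\<in>Z. \<exists>z'\<in>Z. z \<noteq> z' \<and> sphere24 z \<inter> sphere24 z' \<noteq> {}")
    case True
    then obtain z z' x where "z \<in> Z" "z' \<in> Z" "z \<noteq> z'" "x \<in> sphere24 z" "x \<in> sphere24 z'"
      by blast
    hence "45 \<le> card (nbrs24 x \<inter> C)" and "x \<in> C"
      using overlapping_spheres_neighbours[OF Z C] C by auto
    moreover have "int (card (nbrs24 x \<inter> C)) = 20 + c"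
      using \<open>x \<in> C\<close> assms(2) by (simp add: perfect_coloring24_def)
    ultimately show ?thesis by simp
  next
    case False
    hence "card C = 24 * card Z" using card_disjoint_spheres[of Z] Z C by blast
    with perfect_coloring_balance[OF assms(2)]
    have "2 ^ 23 * c = 3 * (2048 * int (card Z))" by (simp add: algebra_simps)
    \<comment> \<open>since 2^24 = 3 * 5592405 + 1\<close>
    hence "c = 3 * (4096 * int (card Z) - 5592405 * c)" by simp
    thus ?thesis by (metis dvd_triv_left)
  qed
qed

end
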